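(* There exists a constant $\lambda\ge1$ such that, if $S=(L_t)_{t=0}^{T-1}$ is an SINR-schedule that supports a multi-commodity flow $f\in\mathcal{F}$, then $f/\lambda$ is a feasible solution of the linear program $\textsc{MaxTh}_{LP}$. Hence $F^*\ge|f|/\lambda$.
   Context: Constants $\alpha\ge0,N>0,\beta>0$. Nodes $V$ ($|V|=n$) in the plane; a link is $e=(s_e,r_e,P_e)$, $\mathcal{L}$ the set of links. $d_e=d(s_e,r_e)$, $d_{e'e}=d(s_{e'},r_e)$, $S_e=P_e/d_e^\alpha$, $S_{e'e}=P_{e'}/d_{e'e}^\alpha$, $\gamma_e=\beta S_e/(S_e-\beta N)$, $a_{e'}(e)=\gamma_eS_{e'e}/S_e$, $\bar a_{e'}(e)=\min\{1,a_{e'}(e)\}$. $L$ is SINR-feasible if $S_e/(N+\sum_{e'\in L\setminus\{e\}}S_{e'e})\ge\beta$ for all $e\in L$. Buckets: $S_{\min}=\min_eS_e$, $B_i=\{e:2^iS_{\min}\le S_e<2^{i+1}S_{\min}\}$. Standing assumption: a constant $\varepsilon>0$ with $S_e/N\ge(1+\varepsilon)\beta$ for all $e\in\mathcal{L}$. Requests $(\hat s_j,\hat t_j,b_j)$, $j=1..k$. $\mathcal{F}$ is the set of multi-commodity flows $f=(f_1,\dots,f_k)$ in $(V,\mathcal{L})$ ($f_j$ a flow from $\hat s_j$ to $\hat t_j$) with $f(e)=\sum_jf_j(e)\le1$ for all $e$ and $|f_j|\le b_j$; $|f|=\sum_j|f_j|$. A schedule $(L_t)_{t=0}^{T-1}$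 is an SINR-schedule if each $L_t$ is SINR-feasible, and supports $f$ if $Tf(e)\le|\{t:e\in L_t\}|$ for all $e$. $\textsc{MaxTh}_{LP}$: maximize $|f|$ subject to $f\in\mathcal{F}$ and, for every $i$ and every $e\in B_i$, $f(e)+\sum_{\{e'\in B_i:d_{e'}\ge d_e\}}(\bar a_{e'}(e)+\bar a_e(e'))f(e')\le1$; $F^*$ is its optimum. *)

theory Defs
  imports Complex_Main
begin

text \<open>Nodes are points of the plane (modelled as complex numbers).
  A link is a triple (sender, receiver, transmission power).\<close>

type_synonym node = complex
type_synonym link = "complex \<times> complex \<times> real"

definition snd_node :: "link \<Rightarrow> node" where "snd_node e = fst e"
definition rcv_node :: "link \<Rightarrow> node" where "rcv_node e = fst (snd e)"
definition power :: "link \<Rightarrow> real" where "power e = snd (snd e)"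

text \<open>d^alpha with the convention d^0 = 1 (also for d = 0).\<close>
definition dpow :: "real \<Rightarrow> real \<Rightarrow> real" where
  "dpow \<alpha> d = (if \<alpha> = 0 then 1 else d powr \<alpha>)"

definition len :: "link \<Rightarrow> real" where "len e = dist (snd_node e) (rcv_node e)"
definition xdist :: "link \<Rightarrow> link \<Rightarrow> real" where
  "xdist e' e = dist (snd_node e') (rcv_node e)"

text \<open>S_e and S_{e'e}; S_{e'e} is only meaningful when dpow (xdist e' e) > 0,
  otherwise it is infinite (handled explicitly below).\<close>
definition sig :: "real \<Rightarrow> link \<Rightarrow> real" where
  "sig \<alpha> e = power e / dpow \<alpha> (len e)"
definition xsig :: "real \<Rightarrow> link \<Rightarrow> link \<Rightarrow> real" where
  "xsig \<alpha> e' e = power e' / dpow \<alpha> (xdist e' e)"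

definition gam :: "real \<Rightarrow> real \<Rightarrow> real \<Rightarrow> link \<Rightarrow> real" where
  "gam \<alpha> N \<beta> e = \<beta> * sig \<alpha> e / (sig \<alpha> e - \<beta> * N)"

text \<open>\bar a_{e'}(e) = min 1 a_{e'}(e); equal to 1 if S_{e'e} is infinite.\<close>
definition abar :: "real \<Rightarrow> real \<Rightarrow> real \<Rightarrow> link \<Rightarrow> link \<Rightarrow> real" where
  "abar \<alpha> N \<beta> e' e =
     (if dpow \<alpha> (xdist e' e) = 0 then 1
      else min 1 (gam \<alpha> N \<beta> e * xsig \<alpha> e' e / sig \<alpha> e))"

text \<open>SINR-feasibility; interference from a sender located at the receiver
  (infinite interference) makes the set infeasible.\<close>
definition sinr_feasible :: "real \<Rightarrow> real \<Rightarrow> real \<Rightarrow> link set \<Rightarrow> bool" where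
  "sinr_feasible \<alpha> N \<beta> L \<longleftrightarrow>
     (\<forall>e\<in>L. (\<forall>e'\<in>L - {e}. dpow \<alpha> (xdist e' e) > 0) \<and>
             sig \<alpha> e / (N + (\<Sum>e'\<in>L - {e}. xsig \<alpha> e' e)) \<ge> \<beta>)"

definition Smin :: "real \<Rightarrow> link set \<Rightarrow> real" where
  "Smin \<alpha> Lk = Min (sig \<alpha> ` Lk)"

definition bucket :: "real \<Rightarrow> link set \<Rightarrow> nat \<Rightarrow> link set" where
  "bucket \<alpha> Lk i = {e \<in> Lk. 2 ^ i * Smin \<alpha> Lk \<le> sig \<alpha> e \<and> sig \<alpha> e < 2 ^ (i + 1) * Smin \<alpha> Lk}"

text \<open>Multi-commodity flows: commodity j < k, f j e = flow of commodity j on link e.\<close>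
definition flow_val :: "link set \<Rightarrow> node \<Rightarrow> (link \<Rightarrow> real) \<Rightarrow> real" where
  "flow_val Lk s g = (\<Sum>e\<in>{e\<in>Lk. snd_node e = s}. g e) - (\<Sum>e\<in>{e\<in>Lk. rcv_node e = s}. g e)"

definition tot_flow :: "nat \<Rightarrow> (nat \<Rightarrow> link \<Rightarrow> real) \<Rightarrow> link \<Rightarrow> real" where
  "tot_flow k f e = (\<Sum>j<k. f j e)"

definition tot_val :: "link set \<Rightarrow> nat \<Rightarrow> (nat \<Rightarrow> node) \<Rightarrow> (nat \<Rightarrow> link \<Rightarrow> real) \<Rightarrow> real" where
  "tot_val Lk k src f = (\<Sum>j<k. flow_val Lk (src j) (f j))"

definition is_flow :: "node set \<Rightarrow> link set \<Rightarrow> node \<Rightarrow> node \<Rightarrow> (link \<Rightarrow> real) \<Rightarrow> bool" where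
  "is_flow V Lk s t g \<longleftrightarrow>
     (\<forall>e\<in>Lk. 0 \<le> g e) \<and>
     (\<forall>v\<in>V. v \<noteq> s \<and> v \<noteq> t \<longrightarrow>
        (\<Sum>e\<in>{e\<in>Lk. rcv_node e = v}. g e) = (\<Sum>e\<in>{e\<in>Lk. snd_node e = v}. g e))"

definition in_F :: "node set \<Rightarrow> link set \<Rightarrow> nat \<Rightarrow> (nat \<Rightarrow> node) \<Rightarrow> (nat \<Rightarrow> node)
     \<Rightarrow> (nat \<Rightarrow> real) \<Rightarrow> (nat \<Rightarrow> link \<Rightarrow> real) \<Rightarrow> bool" where
  "in_F V Lk k src snk b f \<longleftrightarrow>
     (\<forall>j<k. is_flow V Lk (src j) (snk j) (f j) \<and> flow_val Lk (src j) (f j) \<le> b j) \<and>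
     (\<forall>e\<in>Lk. tot_flow k f e \<le> 1)"

definition lp_feasible :: "real \<Rightarrow> real \<Rightarrow> real \<Rightarrow> node set \<Rightarrow> link set \<Rightarrow> nat \<Rightarrow> (nat \<Rightarrow> node)
     \<Rightarrow> (nat \<Rightarrow> node) \<Rightarrow> (nat \<Rightarrow> real) \<Rightarrow> (nat \<Rightarrow> link \<Rightarrow> real) \<Rightarrow> bool" where
  "lp_feasible \<alpha> N \<beta> V Lk k src snk b f \<longleftrightarrow>
     in_F V Lk k src snk b f \<and>
     (\<forall>i. \<forall>e\<in>bucket \<alpha> Lk i.
        tot_flow k f e +
        (\<Sum>e'\<in>{e'\<in>bucket \<alpha> Lk i. len e' \<ge> len e}.
            (abar \<alpha> N \<beta> e' e + abar \<alpha> N \<beta> e e') * tot_flow k f e') \<le> 1)"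

definition Fstar :: "real \<Rightarrow> real \<Rightarrow> real \<Rightarrow> node set \<Rightarrow> link set \<Rightarrow> nat \<Rightarrow> (nat \<Rightarrow> node)
     \<Rightarrow> (nat \<Rightarrow> node) \<Rightarrow> (nat \<Rightarrow> real) \<Rightarrow> real" where
  "Fstar \<alpha> N \<beta> V Lk k src snk b =
     Sup {tot_val Lk k src g | g. lp_feasible \<alpha> N \<beta> V Lk k src snk b g}"

definition sinr_schedule :: "real \<Rightarrow> real \<Rightarrow> real \<Rightarrow> link set \<Rightarrow> nat \<Rightarrow> (nat \<Rightarrow> link set) \<Rightarrow> bool" where
  "sinr_schedule \<alpha> N \<beta> Lk T Ls \<longleftrightarrow> (\<forall>t<T. Ls t \<subseteq> Lk \<and> sinr_feasible \<alpha> N \<beta> (Ls t))"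

definition supports :: "link set \<Rightarrow> nat \<Rightarrow> (nat \<Rightarrow> link set) \<Rightarrow> nat \<Rightarrow> (nat \<Rightarrow> link \<Rightarrow> real) \<Rightarrow> bool" where
  "supports Lk T Ls k f \<longleftrightarrow>
     (\<forall>e\<in>Lk. real T * tot_flow k f e \<le> real (card {t. t < T \<and> e \<in> Ls t}))"

definition instance_ok :: "real \<Rightarrow> real \<Rightarrow> real \<Rightarrow> real \<Rightarrow> node set \<Rightarrow> link set \<Rightarrow> bool" where
  "instance_ok \<alpha> N \<beta> \<epsilon> V Lk \<longleftrightarrow>
     finite V \<and> finite Lk \<and> Lk \<noteq> {} \<and>
     (\<forall>e\<in>Lk. snd_node e \<in> V \<and> rcv_node e \<in> V \<and> snd_node e \<noteq> rcv_node e \<and> power e > 0 \<and>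
             sig \<alpha> e / N \<ge> (1 + \<epsilon>) * \<beta>)"

end

theory Submission
  imports Defs
begin

text \<open>Fix a link \<open>e\<close> of a bucket \<open>B\<^sub>i\<close> and one SINR-feasible set \<open>L\<close> of the schedule, and
  consider the links \<open>e' \<in> L \<inter> B\<^sub>i\<close> with \<open>d\<^sub>e\<^sub>' \<ge> d\<^sub>e\<close>. Let \<open>e\<^sub>2\<close> be the one whose receiver is
  nearest to \<open>r\<^sub>e\<close> (for \<open>\<bar>a\<^sub>e\<^sub>'(e)\<close>) or to \<open>s\<^sub>e\<close> (for \<open>\<bar>a\<^sub>e(e')\<close>). By the triangle inequality,
  \<open>d(s\<^sub>e\<^sub>', r\<^sub>e\<^sub>2)\<close> is at most a constant times the distances occurring in the coefficient, so
  every other coefficient is at most a constant times \<open>d\<^sub>e\<^sub>'\<^sup>\<alpha> / d(s\<^sub>e\<^sub>', r\<^sub>e\<^sub>2)\<^sup>\<alpha>\<close>. As the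
  signal strengths in a bucket differ by at most a factor 2, SINR-feasibility at \<open>e\<^sub>2\<close> bounds
  the sum of these ratios by \<open>2/\<beta>\<close>. Hence the LP constraint restricted to a single \<open>L\<^sub>t\<close> is
  bounded by a constant \<open>C\<close>; averaging over a schedule that supports \<open>f\<close> gives the same bound
  for \<open>f\<close>, and \<open>\<lambda> = 1 + C\<close> works.\<close>

text \<open>\<open>\<bar>a\<^sub>e\<^sub>'(e)\<close> is \<open>capped_ratio \<alpha> (\<gamma>\<^sub>e S\<^sub>e\<^sub>' / S\<^sub>e) d\<^sub>e\<^sub>' d\<^sub>e\<^sub>'\<^sub>e\<close>.\<close>
definition capped_ratio :: "real \<Rightarrow> real \<Rightarrow> real \<Rightarrow> real \<Rightarrow> real" where
  "capped_ratio \<alpha> c u x = (if dpow \<alpha> x = 0 then 1 else min 1 (c * dpow \<alpha> u / dpow \<alpha> x))"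

lemma dpow_nonneg: "0 \<le> dpow \<alpha> d"
  by (simp add: dpow_def)

lemma dpow_pos: "0 < d \<Longrightarrow> 0 < dpow \<alpha> d"
  by (simp add: dpow_def)

lemma capped_ratio_le_1: "capped_ratio \<alpha> c u x \<le> 1"
  by (simp add: capped_ratio_def)

lemma abar_le_1: "abar \<alpha> N \<beta> e' e \<le> 1"
  by (simp add: abar_def)

lemma capped_ratio_nonneg: "0 \<le> c \<Longrightarrow> 0 \<le> capped_ratio \<alpha> c u x"
  by (simp add: capped_ratio_def dpow_nonneg)

text \<open>Either \<open>x \<le> v\<close>, and then the right-hand side is at least 1, or \<open>z \<le> K x\<close> and
  \<open>u/x \<le> K v/z\<close>.\<close>
lemma capped_ratio_le:
  assumes "0 \<le> \<alpha>" "0 < u" "u \<le> v" "0 \<le> x" "0 \<le> z" "0 < dpow \<alpha> z" "0 < K" "z \<le> K * max v x"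
    and "0 \<le> c" "c \<le> C" "1 \<le> C"
  shows "capped_ratio \<alpha> c u x \<le> C * K powr \<alpha> * dpow \<alpha> v / dpow \<alpha> z"
proof (cases "\<alpha> = 0")
  case True
  then show ?thesis using assms by (simp add: capped_ratio_def dpow_def)
next
  case False
  have dp: "dpow \<alpha> w = w powr \<alpha>" for w using False by (simp add: dpow_def)
  have z: "0 < z" using assms(5,6) dp[of z] by (cases "z = 0") auto
  have v: "0 < v" using assms(2,3) by simp
  have rhs: "C * K powr \<alpha> * dpow \<alpha> v / dpow \<alpha> z = C * (K * v / z) powr \<alpha>"
    using assms(7) z v by (simp add: dp powr_mult powr_divide)
  show ?thesis
  proof (cases "x \<le> v")
    case True
    then have "1 \<le> K * v / z" using assms(8) z by (simp add: max_def)
    then have "1 \<le> (K * v / z) powr \<alpha>" by (simp add: ge_one_powr_ge_zero assms(1))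
    then have "1 \<le> C * (K * v / z) powr \<alpha>" using assms(11) by (metis mult_mono' mult_1 zero_le_one)
    then show ?thesis using rhs capped_ratio_le_1 by (metis order_trans)
  next
    case False
    then have x: "0 < x" using v by simp
    have "z * u \<le> (K * x) * v"
      using assms(2,3,8) False z by (intro mult_mono) (auto simp: max_def)
    then have "u / x \<le> K * v / z" using z x by (simp add: field_simps)
    then have "dpow \<alpha> u / dpow \<alpha> x \<le> (K * v / z) powr \<alpha>"
      using assms(1,2) x by (simp add: dp powr_divide[symmetric] powr_mono2)
    then have "c * (dpow \<alpha> u / dpow \<alpha> x) \<le> C * (K * v / z) powr \<alpha>"
      using assms(9,10) by (intro mult_mono) (auto simp: dp)
    then show ?thesis using rhs x by (simp add: capped_ratio_def dp)
  qed
qed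

lemma xdist_le_via_nearest:
  assumes "dist p (rcv_node e2) \<le> dist p (rcv_node e')"
  shows "xdist e' e2 \<le> len e' + 2 * dist p (rcv_node e')"
proof -
  have "xdist e' e2 \<le> len e' + dist (rcv_node e') p + dist p (rcv_node e2)"
    unfolding xdist_def len_def
    using dist_triangle[of "snd_node e'" "rcv_node e2" "rcv_node e'"]
      dist_triangle[of "rcv_node e'" "rcv_node e2" p] by linarith
  then show ?thesis using assms by (simp add: dist_commute)
qed

lemma bucket_sig_le_double:
  "e1 \<in> bucket \<alpha> Lk i \<Longrightarrow> e2 \<in> bucket \<alpha> Lk i \<Longrightarrow> sig \<alpha> e1 \<le> 2 * sig \<alpha> e2"
  by (auto simp: bucket_def)

lemma sum_weighted_le_by_schedule:
  fixes w g :: "'a \<Rightarrow> real" and Ls :: "nat \<Rightarrow> 'a set"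
  assumes "finite B" "0 < T" "\<forall>e\<in>B. 0 \<le> w e"
    and "\<forall>e\<in>B. real T * g e \<le> real (card {t. t < T \<and> e \<in> Ls t})"
    and "\<forall>t<T. (\<Sum>e\<in>B \<inter> Ls t. w e) \<le> C"
  shows "(\<Sum>e\<in>B. w e * g e) \<le> C"
proof -
  have card_eq: "real (card {t. t < T \<and> e \<in> Ls t}) = (\<Sum>t<T. if e \<in> Ls t then 1 else 0)" for e
  proof -
    have "{t. t < T \<and> e \<in> Ls t} = {..<T} \<inter> {t. e \<in> Ls t}" by auto
    then show ?thesis by (simp add: sum.If_cases)
  qed
  have "real T * (\<Sum>e\<in>B. w e * g e) = (\<Sum>e\<in>B. w e * (real T * g e))"
    by (simp add: sum_distrib_left mult_ac)
  also have "\<dots> \<le> (\<Sum>e\<in>B. w e * real (card {t. t < T \<and> e \<in> Ls t}))"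
    using assms(3,4) by (intro sum_mono mult_left_mono) auto
  also have "\<dots> = (\<Sum>t<T. \<Sum>e\<in>B \<inter> Ls t. w e)"
    unfolding card_eq sum_distrib_left sum.inter_restrict[OF assms(1)]
    by (subst sum.swap) (simp add: if_distrib cong: if_cong)
  also have "\<dots> \<le> (\<Sum>t<T. C)"
    using assms(5) by (intro sum_mono) auto
  finally show ?thesis using assms(2) by simp
qed

lemma divide_le_if_ge_1:
  fixes x b lam :: real
  assumes "x \<le> b" "0 \<le> b" "1 \<le> lam"
  shows "x / lam \<le> b"
proof (cases "0 \<le> x")
  case True
  then have "x / lam \<le> x" using assms(3) by (simp add: divide_le_eq mult_le_cancel_left1)
  then show ?thesis using assms(1) by linarith
next
  case False
  then have "x / lam \<le> 0" using assms(3) by (simp add: divide_nonpos_pos)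
  then show ?thesis using assms(2) by linarith
qed

lemma flow_val_divide: "flow_val Lk s (\<lambda>e. g e / lam) = flow_val Lk s g / lam"
  by (simp add: flow_val_def sum_divide_distrib diff_divide_distrib)

lemma tot_flow_divide: "tot_flow k (\<lambda>j e. f j e / lam) e = tot_flow k f e / lam"
  by (simp add: tot_flow_def sum_divide_distrib)

lemma tot_val_divide: "tot_val Lk k src (\<lambda>j e. f j e / lam) = tot_val Lk k src f / lam"
  by (simp add: tot_val_def flow_val_divide sum_divide_distrib)

lemma is_flow_divide: "is_flow V Lk s t g \<Longrightarrow> 0 < lam \<Longrightarrow> is_flow V Lk s t (\<lambda>e. g e / lam)"
  by (simp add: is_flow_def sum_divide_distrib[symmetric])

lemma in_F_divide:
  assumes "in_F V Lk k src snk b f" "\<forall>j<k. 0 \<le> b j" "1 \<le> lam"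
  shows "in_F V Lk k src snk b (\<lambda>j e. f j e / lam)"
  using assms is_flow_divide[of V Lk _ _ _ lam]
  unfolding in_F_def by (simp add: flow_val_divide tot_flow_divide divide_le_if_ge_1)

lemma tot_val_le_Fstar:
  assumes "lp_feasible \<alpha> N \<beta> V Lk k src snk b g"
  shows "tot_val Lk k src g \<le> Fstar \<alpha> N \<beta> V Lk k src snk b"
proof -
  have "bdd_above {tot_val Lk k src g | g. lp_feasible \<alpha> N \<beta> V Lk k src snk b g}"
  proof (rule bdd_aboveI)
    fix x assume "x \<in> {tot_val Lk k src g | g. lp_feasible \<alpha> N \<beta> V Lk k src snk b g}"
    then obtain g where "x = tot_val Lk k src g" "lp_feasible \<alpha> N \<beta> V Lk k src snk b g"
      by auto
    then show "x \<le> (\<Sum>j<k. b j)"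
      unfolding tot_val_def lp_feasible_def in_F_def by (auto intro: sum_mono)
  qed
  then show ?thesis
    unfolding Fstar_def using assms by (auto intro: cSup_upper)
qed

definition coupling_const :: "real \<Rightarrow> real \<Rightarrow> real" where
  "coupling_const \<beta> \<epsilon> = max 1 (2 * (\<beta> * (1 + \<epsilon>) / \<epsilon>))"

lemma coupling_const_ge_1: "1 \<le> coupling_const \<beta> \<epsilon>"
  by (simp add: coupling_const_def)

locale sinr_instance =
  fixes \<alpha> N \<beta> \<epsilon> :: real and V :: "node set" and Lk :: "link set"
  assumes alpha_nonneg: "0 \<le> \<alpha>" and noise_pos: "0 < N" and beta_pos: "0 < \<beta>"
    and eps_pos: "0 < \<epsilon>" and well_formed: "instance_ok \<alpha> N \<beta> \<epsilon> V Lk"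
begin

lemma finite_links: "finite Lk"
  using well_formed by (simp add: instance_ok_def)

lemma sig_lower: "e \<in> Lk \<Longrightarrow> (1 + \<epsilon>) * \<beta> * N \<le> sig \<alpha> e"
  using well_formed noise_pos by (auto simp: instance_ok_def field_simps)

lemma sig_pos: "e \<in> Lk \<Longrightarrow> 0 < sig \<alpha> e"
  using sig_lower[of e] beta_pos eps_pos noise_pos
  by (smt (verit) mult_pos_pos)

lemma power_pos: "e \<in> Lk \<Longrightarrow> 0 < power e"
  using well_formed by (simp add: instance_ok_def)

lemma len_pos: "e \<in> Lk \<Longrightarrow> 0 < len e"
  using well_formed by (simp add: instance_ok_def len_def)

lemma power_eq_sig: "e \<in> Lk \<Longrightarrow> power e = sig \<alpha> e * dpow \<alpha> (len e)"
  using dpow_pos[OF len_pos, of e \<alpha>] by (simp add: sig_def)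

lemma gam_nonneg: "e \<in> Lk \<Longrightarrow> 0 \<le> gam \<alpha> N \<beta> e"
proof -
  assume e: "e \<in> Lk"
  have "\<epsilon> * \<beta> * N \<le> sig \<alpha> e - \<beta> * N" using sig_lower[OF e] by (simp add: algebra_simps)
  moreover have "0 < \<epsilon> * \<beta> * N" using eps_pos beta_pos noise_pos by simp
  ultimately show ?thesis
    unfolding gam_def using sig_pos[OF e] beta_pos by simp
qed

lemma gam_le: "e \<in> Lk \<Longrightarrow> gam \<alpha> N \<beta> e \<le> \<beta> * (1 + \<epsilon>) / \<epsilon>"
proof -
  assume e: "e \<in> Lk"
  have gap: "\<epsilon> * \<beta> * N \<le> sig \<alpha> e - \<beta> * N" "0 < \<epsilon> * \<beta> * N"
    using sig_lower[OF e] eps_pos beta_pos noise_pos by (simp_all add: algebra_simps)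
  have "\<beta> * ((1 + \<epsilon>) * \<beta> * N) \<le> \<beta> * sig \<alpha> e"
    using sig_lower[OF e] beta_pos by simp
  then have "\<beta> * sig \<alpha> e * \<epsilon> \<le> \<beta> * (1 + \<epsilon>) * (sig \<alpha> e - \<beta> * N)"
    by (simp add: algebra_simps)
  then show ?thesis
    unfolding gam_def using gap eps_pos by (simp add: field_simps)
qed

lemma gam_ratio_bounds:
  assumes "e1 \<in> bucket \<alpha> Lk i" "e2 \<in> bucket \<alpha> Lk i"
  shows "0 \<le> gam \<alpha> N \<beta> e1 * sig \<alpha> e2 / sig \<alpha> e1"
    and "gam \<alpha> N \<beta> e1 * sig \<alpha> e2 / sig \<alpha> e1 \<le> coupling_const \<beta> \<epsilon>"
proof -
  have e: "e1 \<in> Lk" "e2 \<in> Lk" using assms by (simp_all add: bucket_def)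
  have ratio: "0 \<le> sig \<alpha> e2 / sig \<alpha> e1" "sig \<alpha> e2 / sig \<alpha> e1 \<le> 2"
    using bucket_sig_le_double[OF assms(2,1)] sig_pos[OF e(1)] sig_pos[OF e(2)]
    by (simp_all add: field_simps)
  show "0 \<le> gam \<alpha> N \<beta> e1 * sig \<alpha> e2 / sig \<alpha> e1"
    using gam_nonneg[OF e(1)] ratio(1) by (metis times_divide_eq_right mult_nonneg_nonneg)
  have "gam \<alpha> N \<beta> e1 * (sig \<alpha> e2 / sig \<alpha> e1) \<le> \<beta> * (1 + \<epsilon>) / \<epsilon> * 2"
    using gam_le[OF e(1)] gam_nonneg[OF e(1)] ratio by (intro mult_mono) auto
  then show "gam \<alpha> N \<beta> e1 * sig \<alpha> e2 / sig \<alpha> e1 \<le> coupling_const \<beta> \<epsilon>"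
    unfolding coupling_const_def by (simp add: mult.commute)
qed

lemma abar_eq_capped_ratio:
  "e' \<in> Lk \<Longrightarrow> abar \<alpha> N \<beta> e' e
     = capped_ratio \<alpha> (gam \<alpha> N \<beta> e * sig \<alpha> e' / sig \<alpha> e) (len e') (xdist e' e)"
  by (simp add: abar_def capped_ratio_def xsig_def power_eq_sig mult_ac)

lemma abar_nonneg: "e \<in> Lk \<Longrightarrow> e' \<in> Lk \<Longrightarrow> 0 \<le> abar \<alpha> N \<beta> e' e"
  using abar_eq_capped_ratio[of e' e] gam_nonneg[of e] sig_pos[of e] sig_pos[of e']
  by (simp add: capped_ratio_nonneg)

text \<open>Each term, multiplied by \<open>S\<^sub>e/2 \<le> S\<^sub>e\<^sub>'\<close>, is at most the interference \<open>S\<^sub>e\<^sub>'\<^sub>e\<close>,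
  and SINR-feasibility bounds \<open>\<beta>\<close> times the total interference at \<open>e\<close> by \<open>S\<^sub>e\<close>.\<close>
lemma feasible_interference_sum_le:
  assumes "L \<subseteq> Lk" "sinr_feasible \<alpha> N \<beta> L" "e \<in> L" "A \<subseteq> L - {e}"
    and "\<forall>e'\<in>A. sig \<alpha> e \<le> 2 * sig \<alpha> e'"
  shows "(\<Sum>e'\<in>A. dpow \<alpha> (len e') / dpow \<alpha> (xdist e' e)) \<le> 2 / \<beta>"
proof -
  have finL: "finite L" using assms(1) finite_links by (rule finite_subset)
  have eLk: "e \<in> Lk" using assms(1,3) by auto
  define X where "X = (\<Sum>e'\<in>L - {e}. xsig \<alpha> e' e)"
  have xsig_nonneg: "0 \<le> xsig \<alpha> e' e" if "e' \<in> L" for e'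
    using power_pos[of e'] that assms(1) by (auto simp: xsig_def dpow_nonneg)
  have "X \<ge> 0" unfolding X_def using xsig_nonneg by (intro sum_nonneg) blast
  moreover have "\<beta> \<le> sig \<alpha> e / (N + X)"
    using assms(2,3) unfolding sinr_feasible_def X_def by blast
  ultimately have interference: "\<beta> * X \<le> sig \<alpha> e"
    using noise_pos beta_pos by (simp add: field_simps) (smt (verit) mult_pos_pos)
  have "(\<Sum>e'\<in>A. sig \<alpha> e / 2 * (dpow \<alpha> (len e') / dpow \<alpha> (xdist e' e)))
        \<le> (\<Sum>e'\<in>A. xsig \<alpha> e' e)"
  proof (rule sum_mono)
    fix e' assume e': "e' \<in> A"
    then have "e' \<in> Lk" using assms(1,4) by auto
    then have "xsig \<alpha> e' e = sig \<alpha> e' * (dpow \<alpha> (len e') / dpow \<alpha> (xdist e' e))"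
      by (simp add: xsig_def power_eq_sig)
    moreover have "sig \<alpha> e / 2 \<le> sig \<alpha> e'" using assms(5) e' by auto
    moreover have "0 \<le> dpow \<alpha> (len e') / dpow \<alpha> (xdist e' e)" by (simp add: dpow_nonneg)
    ultimately show "sig \<alpha> e / 2 * (dpow \<alpha> (len e') / dpow \<alpha> (xdist e' e)) \<le> xsig \<alpha> e' e"
      by (metis mult_right_mono)
  qed
  also have "\<dots> \<le> X"
    unfolding X_def using assms(4) finL xsig_nonneg by (intro sum_mono2) auto
  finally have "sig \<alpha> e / 2 * (\<Sum>e'\<in>A. dpow \<alpha> (len e') / dpow \<alpha> (xdist e' e)) \<le> X"
    by (simp add: sum_distrib_left)
  then have "\<beta> * (sig \<alpha> e / 2 * (\<Sum>e'\<in>A. dpow \<alpha> (len e') / dpow \<alpha> (xdist e' e))) \<le> sig \<alpha> e"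
    using interference beta_pos by (smt (verit) mult_left_mono)
  then show ?thesis using sig_pos[OF eLk] beta_pos by (simp add: field_simps)
qed

text \<open>Pick the link \<open>e\<^sub>2\<close> of \<open>A\<close> whose receiver is nearest to \<open>p\<close>: its own term is at most 1,
  and the remaining terms are controlled by the interference at \<open>e\<^sub>2\<close>.\<close>
lemma sum_le_via_nearest_link:
  fixes h :: "link \<Rightarrow> real" and p :: node
  assumes "L \<subseteq> Lk" "sinr_feasible \<alpha> N \<beta> L" "A \<subseteq> L"
    and "\<forall>e1\<in>A. \<forall>e2\<in>A. sig \<alpha> e1 \<le> 2 * sig \<alpha> e2"
    and "0 \<le> K" "\<forall>e'\<in>A. h e' \<le> 1"
    and "\<And>e' e2. e' \<in> A \<Longrightarrow> e2 \<in> A \<Longrightarrow> dist p (rcv_node e2) \<le> dist p (rcv_node e')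
           \<Longrightarrow> 0 < dpow \<alpha> (xdist e' e2) \<Longrightarrow> h e' \<le> K * dpow \<alpha> (len e') / dpow \<alpha> (xdist e' e2)"
  shows "sum h A \<le> 1 + K * (2 / \<beta>)"
proof (cases "A = {}")
  case True
  then show ?thesis using assms(5) beta_pos by simp
next
  case False
  have finA: "finite A" using assms(1,3) finite_links by (meson finite_subset)
  define e2 where "e2 = arg_min_on (\<lambda>y. dist p (rcv_node y)) A"
  have e2: "e2 \<in> A" "\<And>y. y \<in> A \<Longrightarrow> dist p (rcv_node e2) \<le> dist p (rcv_node y)"
    unfolding e2_def using arg_min_if_finite(1)[OF finA False] arg_min_least[OF finA False]
    by auto
  have term_le: "h e' \<le> K * (dpow \<alpha> (len e') / dpow \<alpha> (xdist e' e2))" if "e' \<in> A - {e2}" for e'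
  proof -
    have "0 < dpow \<alpha> (xdist e' e2)"
      using assms(2,3) e2(1) that unfolding sinr_feasible_def by blast
    then show ?thesis using assms(7)[of e' e2] e2 that by simp
  qed
  have "sum h A = h e2 + sum h (A - {e2})"
    using finA e2(1) by (simp add: sum.remove)
  also have "\<dots> \<le> 1 + K * (\<Sum>e'\<in>A - {e2}. dpow \<alpha> (len e') / dpow \<alpha> (xdist e' e2))"
    unfolding sum_distrib_left using assms(6) e2(1) term_le by (intro add_mono sum_mono) auto
  also have "\<dots> \<le> 1 + K * (2 / \<beta>)"
    using feasible_interference_sum_le[OF assms(1,2), of e2 "A - {e2}"] assms(3,4) e2(1)
    by (intro add_left_mono mult_left_mono[OF _ assms(5)]) auto
  finally show ?thesis .
qed

lemma sum_abar_incoming_le: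
  assumes "L \<subseteq> Lk" "sinr_feasible \<alpha> N \<beta> L" "e \<in> bucket \<alpha> Lk i"
  shows "(\<Sum>e'\<in>{e'\<in>L. e' \<in> bucket \<alpha> Lk i \<and> len e \<le> len e'}. abar \<alpha> N \<beta> e' e)
           \<le> 1 + coupling_const \<beta> \<epsilon> * 5 powr \<alpha> * (2 / \<beta>)"
proof (rule sum_le_via_nearest_link[OF assms(1,2), where p = "rcv_node e"])
  show "0 \<le> coupling_const \<beta> \<epsilon> * 5 powr \<alpha>"
    using coupling_const_ge_1[of \<beta> \<epsilon>] by simp
next
  fix e' e2
  assume e': "e' \<in> {e'\<in>L. e' \<in> bucket \<alpha> Lk i \<and> len e \<le> len e'}"
    and nearest: "dist (rcv_node e) (rcv_node e2) \<le> dist (rcv_node e) (rcv_node e')"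
    and pos: "0 < dpow \<alpha> (xdist e' e2)"
  have e'Lk: "e' \<in> Lk" using e' by (simp add: bucket_def)
  have "dist (rcv_node e) (rcv_node e') \<le> len e' + xdist e' e"
    unfolding len_def xdist_def
    using dist_triangle[of "rcv_node e" "rcv_node e'" "snd_node e'"] by (simp add: dist_commute)
  then have "xdist e' e2 \<le> 5 * max (len e') (xdist e' e)"
    using xdist_le_via_nearest[OF nearest] by (simp add: max_def)
  then show "abar \<alpha> N \<beta> e' e \<le> coupling_const \<beta> \<epsilon> * 5 powr \<alpha> * dpow \<alpha> (len e') / dpow \<alpha> (xdist e' e2)"
    unfolding abar_eq_capped_ratio[OF e'Lk]
    using e' assms(3) gam_ratio_bounds[OF assms(3)] len_pos[OF e'Lk] pos
    by (intro capped_ratio_le[OF alpha_nonneg]) (auto simp: xdist_def coupling_const_ge_1)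
qed (auto simp: abar_le_1 intro: bucket_sig_le_double)

lemma sum_abar_outgoing_le:
  assumes "L \<subseteq> Lk" "sinr_feasible \<alpha> N \<beta> L" "e \<in> bucket \<alpha> Lk i"
  shows "(\<Sum>e'\<in>{e'\<in>L. e' \<in> bucket \<alpha> Lk i \<and> len e \<le> len e'}. abar \<alpha> N \<beta> e e')
           \<le> 1 + coupling_const \<beta> \<epsilon> * 3 powr \<alpha> * (2 / \<beta>)"
proof (rule sum_le_via_nearest_link[OF assms(1,2), where p = "snd_node e"])
  show "0 \<le> coupling_const \<beta> \<epsilon> * 3 powr \<alpha>"
    using coupling_const_ge_1[of \<beta> \<epsilon>] by simp
next
  fix e' e2
  assume e': "e' \<in> {e'\<in>L. e' \<in> bucket \<alpha> Lk i \<and> len e \<le> len e'}"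
    and nearest: "dist (snd_node e) (rcv_node e2) \<le> dist (snd_node e) (rcv_node e')"
    and pos: "0 < dpow \<alpha> (xdist e' e2)"
  have eLk: "e \<in> Lk" using assms(3) by (simp add: bucket_def)
  have "xdist e' e2 \<le> 3 * max (len e') (xdist e e')"
    using xdist_le_via_nearest[OF nearest] by (simp add: xdist_def max_def)
  then show "abar \<alpha> N \<beta> e e' \<le> coupling_const \<beta> \<epsilon> * 3 powr \<alpha> * dpow \<alpha> (len e') / dpow \<alpha> (xdist e' e2)"
    unfolding abar_eq_capped_ratio[OF eLk]
    using e' assms(3) gam_ratio_bounds[OF _ assms(3)] len_pos[OF eLk] pos
    by (intro capped_ratio_le[OF alpha_nonneg]) (auto simp: xdist_def coupling_const_ge_1)
qed (auto simp: abar_le_1 intro: bucket_sig_le_double)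

lemma sum_abar_pair_le:
  assumes "L \<subseteq> Lk" "sinr_feasible \<alpha> N \<beta> L" "e \<in> bucket \<alpha> Lk i"
  shows "(\<Sum>e'\<in>{e'\<in>L. e' \<in> bucket \<alpha> Lk i \<and> len e \<le> len e'}. abar \<alpha> N \<beta> e' e + abar \<alpha> N \<beta> e e')
           \<le> 2 + coupling_const \<beta> \<epsilon> * (5 powr \<alpha> + 3 powr \<alpha>) * (2 / \<beta>)"
  using sum_abar_incoming_le[OF assms] sum_abar_outgoing_le[OF assms]
  by (simp add: sum.distrib algebra_simps)

lemma lp_constraint_le:
  assumes "in_F V Lk k src snk b f"
    and "0 < T" "sinr_schedule \<alpha> N \<beta> Lk T Ls" "supports Lk T Ls k f"
    and e: "e \<in> bucket \<alpha> Lk i"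
  shows "tot_flow k f e + (\<Sum>e'\<in>{e'\<in>bucket \<alpha> Lk i. len e \<le> len e'}.
           (abar \<alpha> N \<beta> e' e + abar \<alpha> N \<beta> e e') * tot_flow k f e')
         \<le> 3 + coupling_const \<beta> \<epsilon> * (5 powr \<alpha> + 3 powr \<alpha>) * (2 / \<beta>)"
proof -
  define C where "C = 2 + coupling_const \<beta> \<epsilon> * (5 powr \<alpha> + 3 powr \<alpha>) * (2 / \<beta>)"
  define B where "B = {e'\<in>bucket \<alpha> Lk i. len e \<le> len e'}"
  have "B \<subseteq> Lk" "e \<in> Lk" using e by (auto simp: B_def bucket_def)
  have "(\<Sum>e'\<in>B. (abar \<alpha> N \<beta> e' e + abar \<alpha> N \<beta> e e') * tot_flow k f e') \<le> C"
  proof (rule sum_weighted_le_by_schedule)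
    show "finite B" using \<open>B \<subseteq> Lk\<close> finite_links by (rule finite_subset)
    show "\<forall>e'\<in>B. 0 \<le> abar \<alpha> N \<beta> e' e + abar \<alpha> N \<beta> e e'"
      using \<open>B \<subseteq> Lk\<close> \<open>e \<in> Lk\<close> abar_nonneg by (meson add_nonneg_nonneg subsetD)
    show "\<forall>e'\<in>B. real T * tot_flow k f e' \<le> real (card {t. t < T \<and> e' \<in> Ls t})"
      using assms(4) \<open>B \<subseteq> Lk\<close> by (auto simp: supports_def)
    show "\<forall>t<T. (\<Sum>e'\<in>B \<inter> Ls t. abar \<alpha> N \<beta> e' e + abar \<alpha> N \<beta> e e') \<le> C"
    proof (intro allI impI)
      fix t assume "t < T"
      then have "Ls t \<subseteq> Lk" "sinr_feasible \<alpha> N \<beta> (Ls t)"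
        using assms(3) by (auto simp: sinr_schedule_def)
      moreover have "B \<inter> Ls t = {e'\<in>Ls t. e' \<in> bucket \<alpha> Lk i \<and> len e \<le> len e'}"
        by (auto simp: B_def)
      ultimately show "(\<Sum>e'\<in>B \<inter> Ls t. abar \<alpha> N \<beta> e' e + abar \<alpha> N \<beta> e e') \<le> C"
        using sum_abar_pair_le[OF _ _ e] unfolding C_def by simp
    qed
  qed (use assms(2) in simp)
  moreover have "tot_flow k f e \<le> 1"
    using assms(1) \<open>e \<in> Lk\<close> by (simp add: in_F_def)
  ultimately show ?thesis unfolding B_def C_def by linarith
qed

lemma lp_feasible_divide:
  assumes "in_F V Lk k src snk b f" "\<forall>j<k. 0 \<le> b j"
    and "0 < T" "sinr_schedule \<alpha> N \<beta> Lk T Ls" "supports Lk T Ls k f"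
    and lam: "3 + coupling_const \<beta> \<epsilon> * (5 powr \<alpha> + 3 powr \<alpha>) * (2 / \<beta>) \<le> lam"
  shows "lp_feasible \<alpha> N \<beta> V Lk k src snk b (\<lambda>j e. f j e / lam)"
proof -
  have "0 \<le> coupling_const \<beta> \<epsilon> * (5 powr \<alpha> + 3 powr \<alpha>) * (2 / \<beta>)"
    using coupling_const_ge_1[of \<beta> \<epsilon>] beta_pos by simp
  then have "1 \<le> lam" using lam by linarith
  have "(tot_flow k f e + (\<Sum>e'\<in>{e'\<in>bucket \<alpha> Lk i. len e \<le> len e'}.
          (abar \<alpha> N \<beta> e' e + abar \<alpha> N \<beta> e e') * tot_flow k f e')) / lam \<le> 1"
    if "e \<in> bucket \<alpha> Lk i" for i e
    using lp_constraint_le[OF assms(1,3-5) that] lam \<open>1 \<le> lam\<close> by (simp add: divide_le_eq)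
  then show ?thesis
    using in_F_divide[OF assms(1,2) \<open>1 \<le> lam\<close>]
    by (simp add: lp_feasible_def tot_flow_divide sum_divide_distrib add_divide_distrib)
qed

end

theorem lemma6:
  fixes \<alpha> N \<beta> \<epsilon> :: real
  assumes "\<alpha> \<ge> 0" and "N > 0" and "\<beta> > 0" and "\<epsilon> > 0"
  shows "\<exists>lam::real. lam \<ge> 1 \<and>
    (\<forall>(V::node set) (Lk::link set) (k::nat) (src::nat \<Rightarrow> node) (snk::nat \<Rightarrow> node)
       (b::nat \<Rightarrow> real) (f::nat \<Rightarrow> link \<Rightarrow> real) (T::nat) (Ls::nat \<Rightarrow> link set).
      instance_ok \<alpha> N \<beta> \<epsilon> V Lk \<and>
      (\<forall>j<k. src j \<in> V \<and> snk j \<in> V \<and> 0 \<le> b j) \<and>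
      in_F V Lk k src snk b f \<and>
      T > 0 \<and> sinr_schedule \<alpha> N \<beta> Lk T Ls \<and> supports Lk T Ls k f
      \<longrightarrow> lp_feasible \<alpha> N \<beta> V Lk k src snk b (\<lambda>j e. f j e / lam) \<and>
          tot_val Lk k src f / lam \<le> Fstar \<alpha> N \<beta> V Lk k src snk b)"
proof -
  define lam where "lam = 3 + coupling_const \<beta> \<epsilon> * (5 powr \<alpha> + 3 powr \<alpha>) * (2 / \<beta>)"
  have "1 \<le> lam" unfolding lam_def using coupling_const_ge_1[of \<beta> \<epsilon>] assms(3) by simp
  moreover have "lp_feasible \<alpha> N \<beta> V Lk k src snk b (\<lambda>j e. f j e / lam) \<and>
      tot_val Lk k src f / lam \<le> Fstar \<alpha> N \<beta> V Lk k src snk b"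
    if "instance_ok \<alpha> N \<beta> \<epsilon> V Lk" "\<forall>j<k. 0 \<le> b j" "in_F V Lk k src snk b f"
      "0 < T" "sinr_schedule \<alpha> N \<beta> Lk T Ls" "supports Lk T Ls k f"
    for V Lk k src snk b f T Ls
  proof -
    interpret sinr_instance \<alpha> N \<beta> \<epsilon> V Lk
      using assms that(1) by unfold_locales auto
    have "lp_feasible \<alpha> N \<beta> V Lk k src snk b (\<lambda>j e. f j e / lam)"
      using that(2-6) by (intro lp_feasible_divide) (simp_all add: lam_def)
    then show ?thesis using tot_val_le_Fstar tot_val_divide by metis
  qed
  ultimately show ?thesis by blast
qed

end
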